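(* Let $m\ge1$, let $p_1,\dots,p_m\ge 0$ with $p_1+\cdots+p_m=1$, let $S$ be a finite nonempty word on $[m]$ all of whose letters have positive probability, and let $S'$ be the reversal of $S$. For a die showing face $i$ with probability $p_i$ rolled independently, let $E(W)$ denote the expected number of rolls until the word $W$ first appears as a block of consecutive outcomes. Then $E(S')=E(S)$. *)

theory Defs
  imports "HOL-Probability.Probability"
begin

definition appears_at :: "'a list \<Rightarrow> 'a stream \<Rightarrow> nat \<Rightarrow> bool" where
  "appears_at W \<omega> n \<longleftrightarrow> length W \<le> n \<and> drop (n - length W) (stake n \<omega>) = W"

definition waiting_time :: "'a list \<Rightarrow> 'a stream \<Rightarrow> enat" where
  "waiting_time W \<omega> =
     (if \<exists>n. appears_at W \<omega> n then enat (LEAST n. appears_at W \<omega> n) else \<infinity>)"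

definition expected_wait :: "'a pmf \<Rightarrow> 'a list \<Rightarrow> ennreal" where
  "expected_wait D W =
     (\<integral>\<^sup>+ \<omega>. ennreal_of_enat (waiting_time W \<omega>) \<partial>stream_space (measure_pmf D))"

end

theory Submission
  imports Defs "HOL-Library.Sublist"
begin

text \<open>The waiting time for \<open>W\<close> exceeds \<open>n\<close> exactly when \<open>W\<close> is not a factor of the first
  \<open>n\<close> rolls, so the expected waiting time is \<open>\<Sum>n. P(W is not a factor of n rolls)\<close>.
  The law of \<open>n\<close> independent rolls is invariant under reversing the tuple, and \<open>W\<close> is a
  factor of a tuple iff \<open>rev W\<close> is a factor of its reversal, so every summand is the same
  for \<open>W\<close> and \<open>rev W\<close>.\<close>

lemma ennreal_of_enat_sums: "(\<lambda>n. of_bool (enat n < t)) sums ennreal_of_enat t"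
  using sums_If_finite[of "\<lambda>n. enat n < t" "\<lambda>_. 1 :: ennreal"]
  by (cases t) (simp_all add: of_bool_def sums_def of_nat_tendsto_top_ennreal)

lemma appears_at_le_iff_sublist_stake:
  "(\<exists>k\<le>n. appears_at W \<omega> k) \<longleftrightarrow> sublist W (stake n \<omega>)"
proof
  assume "\<exists>k\<le>n. appears_at W \<omega> k"
  then obtain k where k: "k \<le> n" "length W \<le> k" "drop (k - length W) (stake k \<omega>) = W"
    unfolding appears_at_def by blast
  have "stake n \<omega> = stake k \<omega> @ stake (n - k) (sdrop k \<omega>)"
    using k(1) by (metis le_add_diff_inverse stake_add)
  also have "stake k \<omega> = take (k - length W) (stake k \<omega>) @ W"
    using k(3) by (metis append_take_drop_id)
  finally show "sublist W (stake n \<omega>)"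
    unfolding sublist_def by auto
next
  assume "sublist W (stake n \<omega>)"
  then obtain ps ss where split: "stake n \<omega> = ps @ W @ ss"
    unfolding sublist_def by blast
  define k where "k = length ps + length W"
  have "k \<le> n"
    using arg_cong[OF split, of length] by (simp add: k_def)
  then have "stake k \<omega> = ps @ W"
    by (metis split append_assoc append_eq_conv_conj k_def length_append take_stake min_absorb1)
  with \<open>k \<le> n\<close> show "\<exists>k\<le>n. appears_at W \<omega> k"
    unfolding appears_at_def k_def by auto
qed

lemma enat_less_waiting_time_iff:
  "enat n < waiting_time W \<omega> \<longleftrightarrow> \<not> sublist W (stake n \<omega>)"
proof -
  have "enat n < waiting_time W \<omega> \<longleftrightarrow> (\<forall>k\<le>n. \<not> appears_at W \<omega> k)"
  proof (cases "\<exists>k. appears_at W \<omega> k")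
    case True
    have "n < (LEAST k. appears_at W \<omega> k) \<longleftrightarrow> (\<forall>k\<le>n. \<not> appears_at W \<omega> k)"
      using LeastI_ex[OF True] not_less_Least[of _ "appears_at W \<omega>"]
      by (meson le_less_trans not_le)
    then show ?thesis
      using True unfolding waiting_time_def by simp
  next
    case False
    then show ?thesis
      unfolding waiting_time_def by auto
  qed
  then show ?thesis
    using appears_at_le_iff_sublist_stake by blast
qed

lemma measurable_stake_pmf_stream_space [measurable]:
  "stake n \<in> measurable (stream_space (measure_pmf D)) (count_space (UNIV :: 'a::countable list set))"
proof -
  have "sets (stream_space (measure_pmf D)) = sets (stream_space (count_space UNIV))"
    by (rule sets_stream_space_cong) simp
  then show ?thesis
    using measurable_stake[where 'a = 'a] measurable_cong_sets by blast
qed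

lemma nn_integral_stake_stream_space_pmf:
  fixes f :: "'a::countable list \<Rightarrow> ennreal"
  shows "(\<integral>\<^sup>+\<omega>. f (stake n \<omega>) \<partial>stream_space (measure_pmf D)) = (\<integral>\<^sup>+xs. f xs \<partial>replicate_pmf n D)"
proof (induction n arbitrary: f)
  case 0
  interpret prob_space "stream_space (measure_pmf D)"
    by (rule prob_space.prob_space_stream_space) (rule prob_space_measure_pmf)
  show ?case
    by (simp add: emeasure_space_1)
next
  case (Suc n)
  have "(\<integral>\<^sup>+\<omega>. f (stake (Suc n) \<omega>) \<partial>stream_space (measure_pmf D))
      = (\<integral>\<^sup>+x. (\<integral>\<^sup>+\<omega>. f (x # stake n \<omega>) \<partial>stream_space (measure_pmf D)) \<partial>measure_pmf D)"
    by (subst prob_space.nn_integral_stream_space[OF prob_space_measure_pmf]) simp_all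
  also have "\<dots> = (\<integral>\<^sup>+xs. f xs \<partial>replicate_pmf (Suc n) D)"
    using Suc[of "\<lambda>xs. f (_ # xs)"] by simp
  finally show ?case .
qed

lemma map_pmf_rev_replicate_pmf: "map_pmf rev (replicate_pmf n D) = replicate_pmf n D"
proof (induction n)
  case 0
  then show ?case by simp
next
  case (Suc n)
  have snoc: "replicate_pmf (Suc n) D = do {xs \<leftarrow> replicate_pmf n D; x \<leftarrow> D; return_pmf (xs @ [x])}"
    using replicate_pmf_distrib[of n 1 D] by (simp add: bind_return_pmf bind_assoc_pmf)
  have "map_pmf rev (replicate_pmf (Suc n) D)
      = do {x \<leftarrow> D; xs \<leftarrow> map_pmf rev (replicate_pmf n D); return_pmf (xs @ [x])}"
    by (simp add: map_pmf_def bind_assoc_pmf bind_return_pmf)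
  also have "\<dots> = do {x \<leftarrow> D; xs \<leftarrow> replicate_pmf n D; return_pmf (xs @ [x])}"
    using Suc by simp
  also have "\<dots> = replicate_pmf (Suc n) D"
    unfolding snoc by (rule bind_commute_pmf)
  finally show ?case .
qed

lemma expected_wait_eq_suminf:
  fixes W :: "'a::countable list"
  shows "expected_wait D W = (\<Sum>n. emeasure (replicate_pmf n D) {xs. \<not> sublist W xs})"
proof -
  have "expected_wait D W
      = (\<integral>\<^sup>+\<omega>. (\<Sum>n. indicator {xs. \<not> sublist W xs} (stake n \<omega>)) \<partial>stream_space (measure_pmf D))"
    unfolding expected_wait_def
    by (intro nn_integral_cong)
      (simp add: ennreal_of_enat_sums[THEN sums_unique] enat_less_waiting_time_iff indicator_def)
  also have "\<dots> = (\<Sum>n. \<integral>\<^sup>+\<omega>. indicator {xs. \<not> sublist W xs} (stake n \<omega>) \<partial>stream_space (measure_pmf D))"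
    by (rule nn_integral_suminf) measurable
  also have "\<dots> = (\<Sum>n. emeasure (replicate_pmf n D) {xs. \<not> sublist W xs})"
    by (simp add: nn_integral_stake_stream_space_pmf)
  finally show ?thesis .
qed

lemma expected_wait_rev:
  fixes W :: "'a::countable list"
  shows "expected_wait D (rev W) = expected_wait D W"
proof -
  have "emeasure (replicate_pmf n D) {xs. \<not> sublist (rev W) xs}
      = emeasure (map_pmf rev (replicate_pmf n D)) {xs. \<not> sublist W xs}" for n
    by (simp add: vimage_def sublist_rev_right)
  then show ?thesis
    by (simp add: expected_wait_eq_suminf map_pmf_rev_replicate_pmf)
qed

theorem corollary4p4:
  fixes m :: nat and D :: "nat pmf" and S :: "nat list"
  assumes "m \<ge> 1"
    and "set_pmf D \<subseteq> {1..m}"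
    and "S \<noteq> []"
    and "\<forall>x\<in>set S. x \<in> {1..m} \<and> pmf D x > 0"
  shows "expected_wait D (rev S) = expected_wait D S"
  by (rule expected_wait_rev)

end
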